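(* For any $M\in\mathrm{SL}(3,\mathbb R)$ we have $\mathcal G_{\mathbb S_1^1}(M)\le5$.
   Context: Here $d=2$ and $\mathbb S_1^1$ is the unit circle in $\mathbb R^2$. Elements of $\mathbb R^{3}$ are row vectors $(u,\vec v)$ with $u\in\mathbb R$, $\vec v\in\mathbb R^2$; $\mathbb Z^{3}M$ is the lattice of row vectors $\vec mM$, $\vec m\in\mathbb Z^3$. For $\mathcal D\subseteq\mathbb S_1^{1}$ and $t\in(0,1)$, $\mathcal Q_{\mathcal D}(M,t)=\{(u,\vec v)\in\mathbb Z^{3}M : -t<u<1-t,\ \vec v\in\mathbb R_{>0}\mathcal D\}$, $F_{\mathcal D}(M,t)=\min\{|\vec v| : (u,\vec v)\in\mathcal Q_{\mathcal D}(M,t)\}$, and $\mathcal G_{\mathcal D}(M)=|\{F_{\mathcal D}(M,t):0<t<1\}|$. For $\mathcal D=\mathbb S_1^1$ one has $\mathbb R_{>0}\mathcal D=\mathbb R^2\setminus\{0\}$. *)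

theory Defs
  imports "HOL-Analysis.Analysis"
begin

text \<open>Row vectors in R^3 are elements of real^3; the first coordinate is u,
  the last two form the vector v in R^2.\<close>

definition lattice3 :: "real^3^3 \<Rightarrow> (real^3) set" where
  "lattice3 M = {(\<chi> i. of_int (m $ i)) v* M | m :: int^3. True}"

definition vpart :: "real^3 \<Rightarrow> real^2" where
  "vpart x = (\<chi> i. if i = 1 then x $ 2 else x $ 3)"

definition QD :: "(real^2) set \<Rightarrow> real^3^3 \<Rightarrow> real \<Rightarrow> (real^3) set" where
  "QD D M t = {x \<in> lattice3 M. - t < x $ 1 \<and> x $ 1 < 1 - t \<and>
                 (\<exists>c>0. \<exists>d\<in>D. vpart x = c *\<^sub>R d)}"

definition FD :: "(real^2) set \<Rightarrow> real^3^3 \<Rightarrow> real \<Rightarrow> real" where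
  "FD D M t = Inf ((\<lambda>x. norm (vpart x)) ` QD D M t)"

definition GD_set :: "(real^2) set \<Rightarrow> real^3^3 \<Rightarrow> real set" where
  "GD_set D M = {FD D M t | t. 0 < t \<and> t < 1}"

end

theory Submission
  imports Defs
begin

text \<open>
  By the symmetry \<open>x \<mapsto> -x\<close> of the lattice, \<open>F(t)\<close> only depends on
  \<open>s = max t (1 - t) \<in> [1/2, 1)\<close>: it is the least \<open>|v|\<close> over lattice points with
  \<open>v \<noteq> 0\<close> and \<open>0 \<le> u < s\<close>. Suppose six values are taken at \<open>s\<^sub>0 < \<dots> < s\<^sub>5\<close> and
  let \<open>x\<^sub>k\<close> minimise \<open>|v|\<close> for \<open>s\<^sub>k\<close>, \<open>k = 1..5\<close>. Distinct values force
  \<open>s\<^bsub>k-1\<^esub> \<le> u(x\<^sub>k) < s\<^sub>k\<close> and strictly decreasing \<open>|v(x\<^sub>k)|\<close>. The differences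
  \<open>x\<^sub>l - x\<^sub>k\<close> have \<open>0 < u < 1/2\<close>, so the vectors \<open>z\<^sub>k = v(x\<^sub>k)\<close> are pairwise at distance
  at least \<open>R = F(s\<^sub>0) > |z\<^sub>k|\<close>, hence pairwise more than \<open>\<pi>/3\<close> apart in angle. Seen from
  \<open>z\<^sub>5\<close>, two of \<open>z\<^sub>1, \<dots>, z\<^sub>4\<close> then lie on opposite sides within a half-turn, and for
  them \<open>|z\<^sub>i + z\<^sub>j - z\<^sub>5| < max |z\<^sub>i| |z\<^sub>j|\<close>. But \<open>x\<^sub>i + x\<^sub>j - x\<^sub>5\<close> has
  \<open>0 \<le> u < min (u(x\<^sub>i)) (u(x\<^sub>j))\<close>, contradicting the minimality of \<open>x\<^sub>i\<close> or \<open>x\<^sub>j\<close>.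
\<close>

section \<open>Plane geometry\<close>

lemma mult_cnj_eq_rcis: "a * cnj b = rcis (cmod a * cmod b) (Arg a - Arg b)"
  by (metis rcis_cmod_Arg rcis_cnj rcis_mult diff_conv_add_uminus)

lemma Re_mult_cnj_lt_if_far_apart:
  fixes a b :: complex
  assumes "cmod a < r" "cmod b < r" "r \<le> cmod (a - b)"
  shows "2 * Re (a * cnj b) < cmod a * cmod b"
proof -
  have "(cmod (a - b))\<^sup>2 = (cmod a)\<^sup>2 + (cmod b)\<^sup>2 - 2 * Re (a * cnj b)"
    unfolding cmod_power2 by (simp add: power2_eq_square algebra_simps)
  moreover have "(cmod a)\<^sup>2 < r\<^sup>2" "(cmod b)\<^sup>2 < r\<^sup>2" "r\<^sup>2 \<le> (cmod (a - b))\<^sup>2"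
    using assms norm_ge_zero[of a] norm_ge_zero[of b]
    by (auto intro!: power_strict_mono power_mono simp del: norm_ge_zero)
  moreover have "(cmod a)\<^sup>2 \<le> cmod a * cmod b \<or> (cmod b)\<^sup>2 \<le> cmod a * cmod b"
    by (metis le_cases mult_right_mono mult_left_mono norm_ge_zero power2_eq_square)
  ultimately show ?thesis by linarith
qed

lemma abs_bounds_if_cos_lt_half:
  fixes x :: real
  assumes "cos x < 1/2" "\<bar>x\<bar> < 2 * pi"
  shows "pi/3 < \<bar>x\<bar> \<and> \<bar>x\<bar> < 5 * pi/3"
proof -
  have cos_abs: "cos \<bar>x\<bar> < cos (pi/3)"
    using assms(1) by (simp add: abs_if cos_60)
  have "pi/3 < \<bar>x\<bar>"
    using cos_monotone_0_pi_le[of "\<bar>x\<bar>" "pi/3"] cos_abs by force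
  moreover have "\<bar>x\<bar> < 5 * pi/3"
  proof (rule ccontr)
    assume "\<not> \<bar>x\<bar> < 5 * pi/3"
    then have "cos (pi/3) \<le> cos (2 * pi - \<bar>x\<bar>)"
      using assms(2) by (intro cos_monotone_0_pi_le) auto
    then show False
      using cos_abs by (simp add: cos_diff)
  qed
  ultimately show ?thesis ..
qed

lemma Arg_diff_bounds_if_far_apart:
  fixes a b :: complex
  assumes "cmod a < r" "cmod b < r" "r \<le> cmod (a - b)"
  shows "pi/3 < \<bar>Arg a - Arg b\<bar> \<and> \<bar>Arg a - Arg b\<bar> < 5 * pi/3"
proof (rule abs_bounds_if_cos_lt_half)
  have "a \<noteq> 0" "b \<noteq> 0"
    using assms by auto
  moreover have "cmod a * cmod b * (2 * cos (Arg a - Arg b)) < cmod a * cmod b * 1"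
    using Re_mult_cnj_lt_if_far_apart[OF assms] by (simp add: mult_cnj_eq_rcis)
  ultimately show "cos (Arg a - Arg b) < 1/2"
    by (simp add: mult_less_cancel_left_pos)
  show "\<bar>Arg a - Arg b\<bar> < 2 * pi"
    using Arg_bounded[of a] Arg_bounded[of b] by linarith
qed

lemma four_separated_angles_straddle_zero:
  fixes S :: "real set"
  assumes "card S = 4"
    and bounds: "\<And>q. q \<in> S \<Longrightarrow> - pi < q \<and> q \<le> pi \<and> pi/3 < \<bar>q\<bar>"
    and sep: "\<And>q q'. q \<in> S \<Longrightarrow> q' \<in> S \<Longrightarrow> q \<noteq> q' \<Longrightarrow>
                pi/3 < \<bar>q - q'\<bar> \<and> \<bar>q - q'\<bar> < 5 * pi/3"
  obtains p n where "p \<in> S" "n \<in> S" "n < 0" "0 < p" "p - n < pi"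
proof -
  have "finite S"
    using assms(1) card.infinite by force
  define xs where "xs = sorted_list_of_set S"
  have "length xs = 4"
    using assms(1) by (simp add: xs_def)
  then obtain q0 q1 q2 q3 where "xs = [q0, q1, q2, q3]"
    by (auto simp: numeral_eq_Suc length_Suc_conv)
  then have qs: "sorted_list_of_set S = [q0, q1, q2, q3]"
    by (simp add: xs_def)
  have "S = {q0, q1, q2, q3}"
    using \<open>finite S\<close> qs by (metis set_sorted_list_of_set list.set)
  moreover have "q0 < q1" "q1 < q2" "q2 < q3"
    using strict_sorted_list_of_set[of S] qs by auto
  ultimately have "q1 < 0" "0 < q2" "q2 - q1 < pi" "q1 \<in> S" "q2 \<in> S"
    using bounds[of q0] bounds[of q1] bounds[of q2] bounds[of q3]
      sep[of q1 q0] sep[of q2 q1] sep[of q3 q2] sep[of q3 q0] by auto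
  then show ?thesis
    using that by blast
qed

lemma sum_sq_shift_lt_if_sum_pos:
  fixes a1 s c1 t :: real
  assumes "0 < a1 + c1" "t \<le> s" "0 < t" "2 * c1 < 1" "1 \<le> c1\<^sup>2 + t\<^sup>2"
  shows "(a1 + c1 - 1)\<^sup>2 + (s - t)\<^sup>2 < a1\<^sup>2 + s\<^sup>2"
proof -
  have "a1\<^sup>2 + s\<^sup>2 - ((a1 + c1 - 1)\<^sup>2 + (s - t)\<^sup>2) =
      2 * (a1 + c1) * (1 - c1) + (c1\<^sup>2 + t\<^sup>2 - 1) + 2 * t * (s - t)"
    by (simp add: algebra_simps power2_eq_square)
  moreover have "0 < 2 * (a1 + c1) * (1 - c1)" "0 \<le> 2 * t * (s - t)"
    using assms by simp_all
  ultimately show ?thesis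
    using assms(5) by linarith
qed

lemma sum_sq_shift_lt_if_sum_nonpos:
  fixes a1 s c1 t :: real
  assumes "0 < a1" "a1 + c1 \<le> 0" "0 < s" "0 < s * c1 + t * a1" "2 * a1 < 1" "1 \<le> a1\<^sup>2 + s\<^sup>2"
  shows "(a1 + c1 - 1)\<^sup>2 + (s - t)\<^sup>2 < c1\<^sup>2 + t\<^sup>2"
proof -
  have "a1 * (c1\<^sup>2 + t\<^sup>2 - ((a1 + c1 - 1)\<^sup>2 + (s - t)\<^sup>2)) =
      2 * s * (s * c1 + t * a1) + (a1\<^sup>2 + s\<^sup>2 - 1) * (- 2 * c1 - a1) + 2 * (- c1 - a1) * (1 - a1)"
    by (simp add: algebra_simps power2_eq_square)
  moreover have "0 < 2 * s * (s * c1 + t * a1)" "0 \<le> (a1\<^sup>2 + s\<^sup>2 - 1) * (- 2 * c1 - a1)"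
    "0 \<le> 2 * (- c1 - a1) * (1 - a1)"
    using assms by simp_all
  ultimately have "0 < a1 * (c1\<^sup>2 + t\<^sup>2 - ((a1 + c1 - 1)\<^sup>2 + (s - t)\<^sup>2))"
    by linarith
  then show ?thesis
    using assms(1) by (simp add: zero_less_mult_iff)
qed

lemma cmod_add_diff_one_lt_max:
  fixes a c :: complex
  assumes "0 < Im a" "Im c < 0" "0 < Im (a * cnj c)"
    and "cmod a < cmod (a - 1)" "cmod c < cmod (c - 1)"
    and "1 \<le> cmod a" "1 \<le> cmod c"
  shows "cmod (a + c - 1) < max (cmod a) (cmod c)"
proof -
  define a1 s c1 t where "a1 = Re a" "s = Im a" "c1 = Re c" "t = - Im c"
  have closer: "2 * Re z < 1" if "cmod z < cmod (z - 1)" for z :: complex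
  proof -
    have "(cmod z)\<^sup>2 < (cmod (z - 1))\<^sup>2"
      using that by (simp add: power_strict_mono)
    then show ?thesis
      unfolding cmod_power2 by (simp add: power2_eq_square algebra_simps)
  qed
  have hyps: "0 < s" "0 < t" "0 < s * c1 + t * a1" "2 * a1 < 1" "2 * c1 < 1"
      "1 \<le> a1\<^sup>2 + s\<^sup>2" "1 \<le> c1\<^sup>2 + t\<^sup>2"
    using assms closer[of a] closer[of c] abs_le_square_iff[of 1 "cmod a"]
      abs_le_square_iff[of 1 "cmod c"]
    by (auto simp: a1_s_c1_t_def cmod_power2 algebra_simps)
  have "(a1 + c1 - 1)\<^sup>2 + (s - t)\<^sup>2 < max (a1\<^sup>2 + s\<^sup>2) (c1\<^sup>2 + t\<^sup>2)"
  proof (cases "0 < a1 + c1")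
    case True
    then show ?thesis
      using hyps sum_sq_shift_lt_if_sum_pos[of a1 c1 t s] sum_sq_shift_lt_if_sum_pos[of c1 a1 s t]
      by (smt (verit) power2_commute)
  next
    case False
    have "0 < a1 \<or> 0 < c1"
      using hyps(1-3) by (smt (verit) mult_nonneg_nonpos)
    then show ?thesis
      using False hyps sum_sq_shift_lt_if_sum_nonpos[of a1 c1 s t] sum_sq_shift_lt_if_sum_nonpos[of c1 a1 t s]
      by (smt (verit) power2_commute)
  qed
  then have "(cmod (a + c - 1))\<^sup>2 < (cmod a)\<^sup>2 \<or> (cmod (a + c - 1))\<^sup>2 < (cmod c)\<^sup>2"
    by (simp add: a1_s_c1_t_def cmod_power2 less_max_iff_disj)
  then show ?thesis
    by (metis power2_less_imp_less norm_ge_zero less_max_iff_disj)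
qed

text \<open>The points \<open>1\<close> and \<open>P\<close> are pairwise more than \<open>\<pi>/3\<close> apart in angle, so two of
  the four arguments of \<open>P\<close> straddle \<open>0\<close> within a half-turn.\<close>

lemma four_points_short_combination_normalized:
  fixes P :: "complex set"
  assumes "card P = 4"
    and short: "\<And>p. p \<in> P \<Longrightarrow> 1 < cmod p \<and> cmod p < R \<and> R \<le> cmod (p - 1)"
    and sep: "\<And>p q. p \<in> P \<Longrightarrow> q \<in> P \<Longrightarrow> p \<noteq> q \<Longrightarrow> R \<le> cmod (p - q)"
  obtains a c where "a \<in> P" "c \<in> P" "cmod (a + c - 1) < max (cmod a) (cmod c)"
proof -
  have Arg_sep: "pi/3 < \<bar>Arg p - Arg q\<bar> \<and> \<bar>Arg p - Arg q\<bar> < 5 * pi/3"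
    if "p \<in> P" "q \<in> P" "p \<noteq> q" for p q
    using Arg_diff_bounds_if_far_apart short that sep by blast
  have Arg_far_from_0: "pi/3 < \<bar>Arg p\<bar>" if "p \<in> P" for p
    using Arg_diff_bounds_if_far_apart[of p R 1] short[OF that] by auto
  have "inj_on Arg P"
    using Arg_sep pi_gt_zero by (force intro: inj_onI)
  then have "card (Arg ` P) = 4"
    by (simp add: card_image assms(1))
  moreover have "- pi < q \<and> q \<le> pi \<and> pi/3 < \<bar>q\<bar>" if "q \<in> Arg ` P" for q
    using that Arg_bounded Arg_far_from_0 by auto
  moreover have "pi/3 < \<bar>q - q'\<bar> \<and> \<bar>q - q'\<bar> < 5 * pi/3"
    if "q \<in> Arg ` P" "q' \<in> Arg ` P" "q \<noteq> q'" for q q'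
    using that Arg_sep by auto
  ultimately obtain p n where "p \<in> Arg ` P" "n \<in> Arg ` P" "n < 0" "0 < p" "p - n < pi"
    by (rule four_separated_angles_straddle_zero)
  then obtain a c where ac: "a \<in> P" "c \<in> P" "Arg c < 0" "0 < Arg a" "Arg a - Arg c < pi"
    by blast
  have sin_signs: "0 < sin (Arg a)" "sin (Arg c) < 0" "0 < sin (Arg a - Arg c)"
    using ac Arg_bounded[of c] sin_gt_zero[of "Arg a"] sin_gt_zero[of "- Arg c"]
      sin_gt_zero[of "Arg a - Arg c"]
    by auto
  have norm_pos: "0 < cmod a" "0 < cmod c"
    using short ac by force+
  have Im_polar: "Im w = cmod w * sin (Arg w)" for w
    by (metis Im_rcis rcis_cmod_Arg)
  have "0 < Im a" "Im c < 0"
    using sin_signs norm_pos by (simp_all add: Im_polar[of a] Im_polar[of c] mult_pos_neg)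
  moreover have "0 < Im (a * cnj c)"
    using sin_signs norm_pos by (simp add: mult_cnj_eq_rcis)
  ultimately have "cmod (a + c - 1) < max (cmod a) (cmod c)"
    using short[of a] short[of c] ac by (intro cmod_add_diff_one_lt_max) auto
  with ac show ?thesis
    using that by blast
qed

lemma four_points_short_combination:
  fixes Z :: "complex set"
  assumes "card Z = 4"
    and short: "\<And>z. z \<in> Z \<Longrightarrow> cmod z0 < cmod z \<and> cmod z < R"
    and sep: "\<And>z w. z \<in> insert z0 Z \<Longrightarrow> w \<in> insert z0 Z \<Longrightarrow> z \<noteq> w \<Longrightarrow> R \<le> cmod (z - w)"
  obtains a c where "a \<in> Z" "c \<in> Z" "a + c - z0 \<noteq> 0" "cmod (a + c - z0) < max (cmod a) (cmod c)"
proof -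
  have sep0: "R \<le> cmod (z - z0)" if "z \<in> Z" for z
    using sep[of z z0] short[OF that] that by auto
  obtain z where z: "z \<in> Z"
    using assms(1) by (metis card.empty all_not_in_conv zero_neq_numeral)
  have "z0 \<noteq> 0"
  proof
    assume "z0 = 0"
    then show False
      using sep0[OF z] short[OF z] by simp
  qed
  then have norm_z0: "0 < cmod z0"
    by simp
  define P where "P = (\<lambda>z. z / z0) ` Z"
  have card_P: "card P = 4"
    unfolding P_def using \<open>z0 \<noteq> 0\<close> assms(1) by (simp add: card_image inj_on_def)
  have short_P: "1 < cmod p \<and> cmod p < R / cmod z0 \<and> R / cmod z0 \<le> cmod (p - 1)" if "p \<in> P" for p
  proof -
    obtain z where z: "z \<in> Z" "p = z / z0"
      using \<open>p \<in> P\<close> P_def by blast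
    then have "p - 1 = (z - z0) / z0"
      using \<open>z0 \<noteq> 0\<close> by (simp add: diff_divide_distrib)
    then have "cmod p = cmod z / cmod z0" "cmod (p - 1) = cmod (z - z0) / cmod z0"
      using z(2) by (simp_all add: norm_divide)
    moreover have "1 < cmod z / cmod z0" "cmod z / cmod z0 < R / cmod z0"
        "R / cmod z0 \<le> cmod (z - z0) / cmod z0"
      using short[OF z(1)] sep0[OF z(1)] norm_z0
      by (simp_all add: less_divide_eq divide_strict_right_mono divide_right_mono)
    ultimately show ?thesis
      by simp
  qed
  have sep_P: "R / cmod z0 \<le> cmod (p - q)" if pq: "p \<in> P" "q \<in> P" "p \<noteq> q" for p q
  proof -
    obtain z w where "z \<in> Z" "w \<in> Z" "p = z / z0" "q = w / z0"
      using pq P_def by blast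
    moreover have "p - q = (z - w) / z0"
      using calculation(3,4) by (simp add: diff_divide_distrib)
    moreover have "z \<noteq> w"
      using pq(3) calculation(3,4) by auto
    ultimately have "cmod (p - q) = cmod (z - w) / cmod z0" "R \<le> cmod (z - w)"
      using sep[of z w] by (simp_all add: norm_divide)
    then show ?thesis
      using norm_z0 by (simp add: divide_right_mono)
  qed
  obtain a' c' where "a' \<in> P" "c' \<in> P" "cmod (a' + c' - 1) < max (cmod a') (cmod c')"
    using four_points_short_combination_normalized[OF card_P short_P sep_P] by blast
  then obtain a c where ac: "a \<in> Z" "c \<in> Z"
    and lt: "cmod (a / z0 + c / z0 - 1) < max (cmod (a / z0)) (cmod (c / z0))"
    unfolding P_def by auto
  have "z0 * (a / z0 + c / z0 - 1) = a + c - z0"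
    using \<open>z0 \<noteq> 0\<close> by (simp add: algebra_simps)
  then have "cmod (a + c - z0) = cmod z0 * cmod (a / z0 + c / z0 - 1)"
    by (metis norm_mult)
  also have "\<dots> < cmod z0 * max (cmod (a / z0)) (cmod (c / z0))"
    using lt norm_z0 by simp
  also have "\<dots> = max (cmod a) (cmod c)"
    using norm_z0 by (simp add: norm_divide max_mult_distrib_left)
  finally have "cmod (a + c - z0) < max (cmod a) (cmod c)" .
  moreover have "a + c - z0 \<noteq> 0"
  proof
    assume "a + c - z0 = 0"
    then have "c = - (a - z0)"
      by (simp add: algebra_simps)
    then show False
      using sep0[OF ac(1)] short[OF ac(2)] by (simp add: norm_minus_commute)
  qed
  ultimately show ?thesis
    using that ac by blast
qed

section \<open>Lattice points in slabs\<close>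

lemma lattice3_add:
  assumes "x \<in> lattice3 M" "y \<in> lattice3 M"
  shows "x + y \<in> lattice3 M"
proof -
  obtain m n where "x = (\<chi> i. of_int (m $ i)) v* M" "y = (\<chi> i. of_int (n $ i)) v* M"
    using assms by (auto simp: lattice3_def)
  moreover have "(\<chi> i. of_int (m $ i)) + (\<chi> i. of_int (n $ i)) = (\<chi> i. (of_int ((m + n) $ i) :: real))"
    by (simp add: vec_eq_iff)
  ultimately have "x + y = (\<chi> i. of_int ((m + n) $ i)) v* M"
    by (metis vector_matrix_left_distrib)
  then show ?thesis unfolding lattice3_def by blast
qed

lemma lattice3_uminus:
  assumes "x \<in> lattice3 M"
  shows "- x \<in> lattice3 M"
proof -
  obtain m where "x = (\<chi> i. of_int (m $ i)) v* M"
    using assms by (auto simp: lattice3_def)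
  then have "- x = (\<chi> i. of_int ((- m) $ i)) v* M"
    by (simp add: vec_eq_iff vector_matrix_mult_def sum_negf)
  then show ?thesis unfolding lattice3_def by blast
qed

lemma lattice3_diff: "x \<in> lattice3 M \<Longrightarrow> y \<in> lattice3 M \<Longrightarrow> x - y \<in> lattice3 M"
  using lattice3_add[of x M "- y"] lattice3_uminus[of y M] by simp

lemma finite_int_vec_box: "finite {m :: int^'n. \<forall>i. \<bar>m $ i\<bar> \<le> B}"
proof -
  have "{m :: int^'n. \<forall>i. \<bar>m $ i\<bar> \<le> B} \<subseteq> vec_lambda ` (Pi\<^sub>E UNIV (\<lambda>_. {-B..B}))"
  proof
    fix m :: "int^'n" assume "m \<in> {m. \<forall>i. \<bar>m $ i\<bar> \<le> B}"
    then have "vec_nth m \<in> Pi\<^sub>E UNIV (\<lambda>_. {-B..B})" by (auto simp: abs_le_iff) (metis minus_le_iff)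
    then show "m \<in> vec_lambda ` (Pi\<^sub>E UNIV (\<lambda>_. {-B..B}))"
      by (metis image_eqI vec_nth_inverse)
  qed
  then show ?thesis
    by (rule finite_subset) (intro finite_imageI finite_PiE, auto)
qed

lemma finite_lattice3_cball:
  assumes "invertible M"
  shows "finite {x \<in> lattice3 M. norm x \<le> R}"
proof -
  obtain N where MN: "M ** N = mat 1"
    using assms unfolding invertible_def by blast
  have "bounded_linear (\<lambda>x. x v* N)"
    unfolding transpose_matrix_vector[symmetric] by (rule matrix_vector_mul_bounded_linear)
  then obtain K where K: "K > 0" "\<And>x. norm (x v* N) \<le> norm x * K"
    using bounded_linear.pos_bounded by blast
  define B where "B = \<lceil>R * K\<rceil>"
  have "{x \<in> lattice3 M. norm x \<le> R} \<subseteq>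
      (\<lambda>m. (\<chi> i. of_int (m $ i)) v* M) ` {m :: int^3. \<forall>i. \<bar>m $ i\<bar> \<le> B}"
  proof
    fix x assume x: "x \<in> {x \<in> lattice3 M. norm x \<le> R}"
    then obtain m where xm: "x = (\<chi> i. of_int (m $ i)) v* M"
      by (auto simp: lattice3_def)
    have "\<bar>m $ i\<bar> \<le> B" for i
    proof -
      have "x v* N = (\<chi> i. of_int (m $ i))"
        unfolding xm vector_matrix_mul_assoc MN by simp
      then have "\<bar>real_of_int (m $ i)\<bar> = \<bar>(x v* N) $ i\<bar>" by simp
      also have "\<dots> \<le> norm (x v* N)" by (rule component_le_norm_cart)
      also have "\<dots> \<le> norm x * K" by (rule K(2))
      also have "\<dots> \<le> R * K" using x K(1) by (simp add: mult_right_mono)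
      finally show ?thesis unfolding B_def by linarith
    qed
    then show "x \<in> (\<lambda>m. (\<chi> i. of_int (m $ i)) v* M) ` {m. \<forall>i. \<bar>m $ i\<bar> \<le> B}"
      using xm by blast
  qed
  then show ?thesis using finite_int_vec_box finite_subset by blast
qed

text \<open>The \<open>v\<close>-part as a complex number, so that directions can be compared through \<^const>\<open>Arg\<close>.\<close>

definition vcomplex :: "real^3 \<Rightarrow> complex" where
  "vcomplex x = Complex (x $ 2) (x $ 3)"

lemma norm_vpart: "norm (vpart x) = cmod (vcomplex x)"
  by (simp add: vpart_def vcomplex_def norm_vec_def L2_set_def sum_2 cmod_def)

lemma vcomplex_add [simp]: "vcomplex (x + y) = vcomplex x + vcomplex y"
  and vcomplex_diff [simp]: "vcomplex (x - y) = vcomplex x - vcomplex y"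
  and vcomplex_uminus [simp]: "vcomplex (- x) = - vcomplex x"
  by (simp_all add: vcomplex_def complex_eq_iff)

lemma norm_le_first_plus_vcomplex: "norm x \<le> \<bar>x $ 1\<bar> + 2 * cmod (vcomplex x)"
proof -
  have "norm x \<le> \<bar>x $ 1\<bar> + \<bar>x $ 2\<bar> + \<bar>x $ 3\<bar>"
    using norm_le_l1_cart[of x] by (simp add: sum_3)
  moreover have "\<bar>x $ 2\<bar> \<le> cmod (vcomplex x)" "\<bar>x $ 3\<bar> \<le> cmod (vcomplex x)"
    using abs_Re_le_cmod abs_Im_le_cmod by (metis complex.sel vcomplex_def)+
  ultimately show ?thesis by linarith
qed

definition slab_points :: "real^3^3 \<Rightarrow> real \<Rightarrow> (real^3) set" where
  "slab_points M s = {x \<in> lattice3 M. vcomplex x \<noteq> 0 \<and> 0 \<le> x $ 1 \<and> x $ 1 < s}"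

definition slab_min :: "real^3^3 \<Rightarrow> real \<Rightarrow> real" where
  "slab_min M s = Inf ((\<lambda>x. cmod (vcomplex x)) ` slab_points M s)"

definition slab_minimizer :: "real^3^3 \<Rightarrow> real \<Rightarrow> real^3 \<Rightarrow> bool" where
  "slab_minimizer M s x \<longleftrightarrow>
     x \<in> slab_points M s \<and> (\<forall>y \<in> slab_points M s. cmod (vcomplex x) \<le> cmod (vcomplex y))"

lemma slab_points_mono: "s \<le> s' \<Longrightarrow> slab_points M s \<subseteq> slab_points M s'"
  by (auto simp: slab_points_def)

lemma QD_sphere_iff:
  "x \<in> QD (sphere 0 1) M t \<longleftrightarrow> x \<in> lattice3 M \<and> - t < x $ 1 \<and> x $ 1 < 1 - t \<and> vcomplex x \<noteq> 0"
proof -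
  have "(\<exists>c>0. \<exists>d\<in>sphere 0 1. v = c *\<^sub>R d) \<longleftrightarrow> v \<noteq> 0" for v :: "real^2"
  proof
    assume "v \<noteq> 0"
    then show "\<exists>c>0. \<exists>d\<in>sphere 0 1. v = c *\<^sub>R d"
      by (intro exI[of _ "norm v"] conjI bexI[of _ "v /\<^sub>R norm v"]) auto
  qed auto
  moreover have "vpart x = 0 \<longleftrightarrow> vcomplex x = 0"
    by (metis norm_eq_zero norm_vpart)
  ultimately show ?thesis
    unfolding QD_def by auto
qed

lemma FD_sphere_eq_slab_min:
  assumes "0 < t" "t < 1"
  shows "FD (sphere 0 1) M t = slab_min M (max t (1 - t))"
proof -
  have "(\<lambda>x. norm (vpart x)) ` QD (sphere 0 1) M t =
      (\<lambda>x. cmod (vcomplex x)) ` slab_points M (max t (1 - t))"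
  proof (intro equalityI subsetI)
    fix y assume "y \<in> (\<lambda>x. norm (vpart x)) ` QD (sphere 0 1) M t"
    then obtain x where x: "x \<in> QD (sphere 0 1) M t" "y = cmod (vcomplex x)"
      by (auto simp: norm_vpart)
    then have "x \<in> lattice3 M" "- t < x $ 1" "x $ 1 < 1 - t" "vcomplex x \<noteq> 0"
      by (simp_all add: QD_sphere_iff)
    then have "x \<in> slab_points M (max t (1 - t)) \<or> - x \<in> slab_points M (max t (1 - t))"
      unfolding slab_points_def by (cases "0 \<le> x $ 1") (simp_all add: lattice3_uminus less_max_iff_disj)
    then show "y \<in> (\<lambda>x. cmod (vcomplex x)) ` slab_points M (max t (1 - t))"
      using x(2) by (elim disjE) (force intro: rev_image_eqI)+
  next
    fix y assume "y \<in> (\<lambda>x. cmod (vcomplex x)) ` slab_points M (max t (1 - t))"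
    then obtain x where x: "x \<in> slab_points M (max t (1 - t))" "y = cmod (vcomplex x)"
      by auto
    then have "x \<in> lattice3 M" "0 \<le> x $ 1" "x $ 1 < max t (1 - t)" "vcomplex x \<noteq> 0"
      by (simp_all add: slab_points_def)
    then have "x \<in> QD (sphere 0 1) M t \<or> - x \<in> QD (sphere 0 1) M t"
      unfolding QD_sphere_iff using assms by (cases "x $ 1 < 1 - t") (simp_all add: lattice3_uminus)
    then show "y \<in> (\<lambda>x. norm (vpart x)) ` QD (sphere 0 1) M t"
      using x(2) by (elim disjE) (force intro: rev_image_eqI simp: norm_vpart)+
  qed
  then show ?thesis
    unfolding FD_def slab_min_def by simp
qed

lemma slab_minimizer_exists:
  assumes "invertible M" "slab_points M s \<noteq> {}"
  shows "\<exists>x. slab_minimizer M s x"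
proof -
  define f where "f x = cmod (vcomplex x)" for x
  obtain x0 where x0: "x0 \<in> slab_points M s"
    using assms(2) by blast
  define Y where "Y = {x \<in> slab_points M s. f x \<le> f x0}"
  have "Y \<subseteq> {x \<in> lattice3 M. norm x \<le> s + 2 * f x0}"
  proof
    fix x assume "x \<in> Y"
    then have "x \<in> lattice3 M" "\<bar>x $ 1\<bar> \<le> s" "f x \<le> f x0"
      by (auto simp: Y_def slab_points_def)
    then show "x \<in> {x \<in> lattice3 M. norm x \<le> s + 2 * f x0}"
      using norm_le_first_plus_vcomplex[of x] unfolding f_def by auto
  qed
  then have "finite Y"
    using finite_lattice3_cball[OF assms(1)] finite_subset by blast
  moreover have "x0 \<in> Y"
    using x0 by (simp add: Y_def)
  ultimately obtain x where x: "x \<in> Y" "\<And>y. y \<in> Y \<Longrightarrow> f x \<le> f y"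
    using ex_is_arg_min_if_finite[of Y f] by (auto simp: is_arg_min_linorder)
  have "f x \<le> f y" if "y \<in> slab_points M s" for y
    using x that by (cases "f y \<le> f x0") (auto simp: Y_def)
  then have "slab_minimizer M s x"
    using x(1) by (simp add: slab_minimizer_def Y_def f_def)
  then show ?thesis ..
qed

lemma slab_min_eq_minimizer:
  "slab_minimizer M s x \<Longrightarrow> slab_min M s = cmod (vcomplex x)"
  unfolding slab_min_def slab_minimizer_def by (rule cInf_eq_minimum) auto

lemma GD_set_sphere_subset: "GD_set (sphere 0 1) M \<subseteq> slab_min M ` {1/2..<1}"
proof
  fix y assume "y \<in> GD_set (sphere 0 1) M"
  then obtain t where "0 < t" "t < 1" "y = FD (sphere 0 1) M t"
    by (auto simp: GD_set_def)
  then show "y \<in> slab_min M ` {1/2..<1}"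
    by (intro rev_image_eqI[of "max t (1 - t)"]) (auto simp: FD_sphere_eq_slab_min max_def)
qed

text \<open>Empty slabs all share the unspecified value \<open>Inf {}\<close>.\<close>

lemma slab_points_nonempty_if_slab_min_neq:
  assumes "s \<le> s'" "slab_min M s \<noteq> slab_min M s'"
  shows "slab_points M s' \<noteq> {}"
  using assms slab_points_mono[OF assms(1), of M] by (auto simp: slab_min_def)

lemma slab_minimizer_first_ge:
  assumes "s \<le> s'" "slab_min M s \<noteq> slab_min M s'" "slab_minimizer M s' x"
  shows "s \<le> x $ 1"
proof (rule ccontr)
  assume "\<not> s \<le> x $ 1"
  then have "slab_minimizer M s x"
    using assms(3) slab_points_mono[OF assms(1), of M]
    by (auto simp: slab_minimizer_def slab_points_def)
  then show False
    using assms(2,3) by (simp add: slab_min_eq_minimizer)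
qed

lemma slab_minimizer_norm_less:
  assumes "s \<le> s'" "slab_min M s \<noteq> slab_min M s'"
    and "slab_minimizer M s x" "slab_minimizer M s' x'"
  shows "cmod (vcomplex x') < cmod (vcomplex x)"
proof -
  have "cmod (vcomplex x') \<le> cmod (vcomplex x)"
    using assms(3,4) slab_points_mono[OF assms(1), of M] by (auto simp: slab_minimizer_def)
  moreover have "cmod (vcomplex x') \<noteq> cmod (vcomplex x)"
    using assms(2-4) by (simp add: slab_min_eq_minimizer)
  ultimately show ?thesis
    by simp
qed

section \<open>Six distinct values are impossible\<close>

locale distinct_slab_chain =
  fixes M :: "real^3^3" and s :: "nat \<Rightarrow> real"
  assumes invertible: "invertible M"
    and increasing: "\<And>k l. k < l \<Longrightarrow> l \<le> 5 \<Longrightarrow> s k < s l"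
    and lower: "1/2 \<le> s 0"
    and upper: "s 5 \<le> 1"
    and distinct_values: "\<And>k l. k \<le> 5 \<Longrightarrow> l \<le> 5 \<Longrightarrow> k \<noteq> l \<Longrightarrow> slab_min M (s k) \<noteq> slab_min M (s l)"
begin

definition point :: "nat \<Rightarrow> real^3" where
  "point k = (SOME x. slab_minimizer M (s k) x)"

definition vpoint :: "nat \<Rightarrow> complex" where
  "vpoint k = vcomplex (point k)"

lemma s_le: "k < l \<Longrightarrow> l \<le> 5 \<Longrightarrow> s k \<le> s l"
  using increasing by (simp add: less_imp_le)

lemma slab_min_neq: "k < l \<Longrightarrow> l \<le> 5 \<Longrightarrow> slab_min M (s k) \<noteq> slab_min M (s l)"
  using distinct_values by simp

lemma point_minimizer: "k \<in> {1..5} \<Longrightarrow> slab_minimizer M (s k) (point k)"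
  unfolding point_def
  using slab_points_nonempty_if_slab_min_neq[OF s_le[of 0 k] slab_min_neq[of 0 k]]
  by (intro someI_ex[of "slab_minimizer M (s k)"] slab_minimizer_exists[OF invertible]) auto

lemma point_lattice: "k \<in> {1..5} \<Longrightarrow> point k \<in> lattice3 M"
  and point_first_less: "k \<in> {1..5} \<Longrightarrow> point k $ 1 < s k"
  using point_minimizer by (simp_all add: slab_minimizer_def slab_points_def)

lemma point_first_ge: "k < l \<Longrightarrow> l \<in> {1..5} \<Longrightarrow> s k \<le> point l $ 1"
  by (rule slab_minimizer_first_ge[OF s_le slab_min_neq point_minimizer]) auto

lemma point_first_bounds:
  assumes "k \<in> {1..5}"
  shows "1/2 \<le> point k $ 1" "point k $ 1 < 1"
proof -
  have "s 0 \<le> point k $ 1" "s k \<le> s 5"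
    using point_first_ge[of 0 k] s_le[of k 5] assms by (auto simp: le_less)
  then show "1/2 \<le> point k $ 1" "point k $ 1 < 1"
    using point_first_less[OF assms] lower upper by linarith+
qed

lemma vpoint_decreasing: "k < l \<Longrightarrow> k \<in> {1..5} \<Longrightarrow> l \<in> {1..5} \<Longrightarrow> cmod (vpoint l) < cmod (vpoint k)"
  unfolding vpoint_def by (rule slab_minimizer_norm_less[OF s_le slab_min_neq point_minimizer point_minimizer]) auto

lemma point_diff_in_slab0:
  assumes "k < l" "k \<in> {1..5}" "l \<in> {1..5}"
  shows "point l - point k \<in> slab_points M (s 0)"
proof -
  have "point l - point k \<in> lattice3 M"
    using point_lattice assms by (intro lattice3_diff) auto
  moreover have "vcomplex (point l - point k) \<noteq> 0"
    using vpoint_decreasing[OF assms] by (auto simp: vpoint_def)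
  moreover have "point k $ 1 < point l $ 1"
    using point_first_less[of k] point_first_ge[of k l] assms by fastforce
  moreover have "point l $ 1 - point k $ 1 < s 0"
    using point_first_bounds[of k] point_first_bounds[of l] assms lower by fastforce
  ultimately show ?thesis
    by (simp add: slab_points_def)
qed

lemma point0_minimizer: "slab_minimizer M (s 0) (point 0)"
proof -
  have "slab_points M (s 0) \<noteq> {}"
    using point_diff_in_slab0[of 1 2] by auto
  then show ?thesis
    unfolding point_def by (intro someI_ex[of "slab_minimizer M (s 0)"] slab_minimizer_exists[OF invertible])
qed

lemma vpoint_short: "k \<in> {1..5} \<Longrightarrow> cmod (vpoint k) < cmod (vpoint 0)"
  unfolding vpoint_def
  by (rule slab_minimizer_norm_less[OF s_le slab_min_neq point0_minimizer point_minimizer]) auto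

lemma vpoint_sep:
  assumes "k \<in> {1..5}" "l \<in> {1..5}" "k \<noteq> l"
  shows "cmod (vpoint 0) \<le> cmod (vpoint k - vpoint l)"
proof -
  have ordered: "cmod (vpoint 0) \<le> cmod (vpoint l' - vpoint k')"
    if "k' < l'" "k' \<in> {1..5}" "l' \<in> {1..5}" for k' l'
    using point0_minimizer point_diff_in_slab0[OF that] unfolding slab_minimizer_def vpoint_def
    by (metis vcomplex_diff)
  show ?thesis
    using ordered[of k l] ordered[of l k] assms norm_minus_commute[of "vpoint k" "vpoint l"]
    by (cases "k < l") auto
qed

text \<open>All first coordinates of \<open>point 1, \<dots>, point 5\<close> lie in \<open>[1/2, 1)\<close> and increase,
  so \<open>point i + point j - point 5\<close> lies in the slabs of \<open>s i\<close> and \<open>s j\<close>.\<close>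

lemma vpoint_combination_ge:
  assumes "i \<in> {1..4}" "j \<in> {1..4}" "vpoint i + vpoint j - vpoint 5 \<noteq> 0"
  shows "max (cmod (vpoint i)) (cmod (vpoint j)) \<le> cmod (vpoint i + vpoint j - vpoint 5)"
proof -
  define q where "q = point i + point j - point 5"
  have "cmod (vpoint k) \<le> cmod (vcomplex q)" if "k \<in> {i, j}" for k
  proof -
    have k: "k \<in> {1..5}"
      using that assms by auto
    have "point i $ 1 < point 5 $ 1" "point j $ 1 < point 5 $ 1"
      using point_first_ge[of i 5] point_first_ge[of j 5] point_first_less[of i] point_first_less[of j] assms
      by fastforce+
    moreover have "1/2 \<le> point i $ 1" "1/2 \<le> point j $ 1" "point 5 $ 1 < 1" "point k $ 1 < s k"
      using point_first_bounds[of i] point_first_bounds[of j] point_first_bounds[of 5] point_first_less[OF k]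
        assms by auto
    moreover have "q $ 1 = point i $ 1 + point j $ 1 - point 5 $ 1"
      by (simp add: q_def)
    ultimately have "0 \<le> q $ 1" "q $ 1 < s k"
      using that by auto
    moreover have "q \<in> lattice3 M"
      unfolding q_def using point_lattice assms by (intro lattice3_diff lattice3_add) auto
    moreover have "vcomplex q \<noteq> 0"
      using assms(3) by (simp add: q_def vpoint_def)
    ultimately have "q \<in> slab_points M (s k)"
      by (simp add: slab_points_def)
    then show ?thesis
      using point_minimizer[OF k] by (simp add: slab_minimizer_def vpoint_def)
  qed
  then show ?thesis
    by (simp add: q_def vpoint_def)
qed

lemma impossible: False
proof -
  let ?Z = "vpoint ` {1..4}"
  have "inj_on vpoint {1..4}"
  proof (rule inj_onI)
    fix k l assume "k \<in> {1..4}" "l \<in> {1..4}" "vpoint k = vpoint l"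
    then show "k = l"
      using vpoint_decreasing[of k l] vpoint_decreasing[of l k] by (cases k l rule: linorder_cases) auto
  qed
  then have "card ?Z = 4"
    by (simp add: card_image)
  moreover have "cmod (vpoint 5) < cmod w \<and> cmod w < cmod (vpoint 0)" if w: "w \<in> ?Z" for w
  proof -
    obtain k where "k \<in> {1..4}" "w = vpoint k"
      using w by blast
    then show ?thesis
      using vpoint_decreasing[of k 5] vpoint_short[of k] by simp
  qed
  moreover have "cmod (vpoint 0) \<le> cmod (w - w')"
    if ww': "w \<in> insert (vpoint 5) ?Z" "w' \<in> insert (vpoint 5) ?Z" "w \<noteq> w'" for w w'
  proof -
    have "{1..5::nat} = insert 5 {1..4}"
      by auto
    then have "insert (vpoint 5) ?Z = vpoint ` {1..5}"
      by simp
    then obtain k l where "k \<in> {1..5}" "l \<in> {1..5}" "w = vpoint k" "w' = vpoint l"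
      using ww'(1,2) by auto
    then show ?thesis
      using vpoint_sep[of k l] ww'(3) by auto
  qed
  ultimately obtain a c where "a \<in> ?Z" "c \<in> ?Z" "a + c - vpoint 5 \<noteq> 0"
    "cmod (a + c - vpoint 5) < max (cmod a) (cmod c)"
    by (rule four_points_short_combination)
  then show False
    using vpoint_combination_ge by fastforce
qed

end

lemma finite_card_image_le_if_no_distinct_chain:
  fixes f :: "'a::linorder \<Rightarrow> 'b"
  assumes no_chain: "\<And>s. (\<And>k. k \<le> n \<Longrightarrow> s k \<in> I) \<Longrightarrow> (\<And>k l. k < l \<Longrightarrow> l \<le> n \<Longrightarrow> s k < s l) \<Longrightarrow>
      (\<And>k l. k \<le> n \<Longrightarrow> l \<le> n \<Longrightarrow> k \<noteq> l \<Longrightarrow> f (s k) \<noteq> f (s l)) \<Longrightarrow> False"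
  shows "finite (f ` I) \<and> card (f ` I) \<le> n"
proof (rule ccontr)
  assume "\<not> (finite (f ` I) \<and> card (f ` I) \<le> n)"
  then obtain T where T: "T \<subseteq> f ` I" "card T = Suc n"
    by (metis infinite_arbitrarily_large obtain_subset_with_card_n not_le Suc_leI)
  define S where "S = inv_into I f ` T"
  have "inj_on (inv_into I f) T"
    using T(1) by (rule inj_on_inv_into)
  then have card_S: "card S = Suc n"
    using T(2) by (simp add: S_def card_image)
  have "S \<subseteq> I"
    using T(1) by (auto simp: S_def inv_into_into)
  have "inj_on f S"
    using T(1) by (auto simp: S_def inj_on_def) (metis f_inv_into_f subsetD)
  define xs where "xs = sorted_list_of_set S"
  have "finite S"
    using card_S card.infinite by force
  then have xs: "length xs = Suc n" "sorted_wrt (<) xs" "set xs = S" "distinct xs"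
    using card_S by (simp_all add: xs_def)
  show False
  proof (rule no_chain[of "\<lambda>k. xs ! k"])
    show "xs ! k \<in> I" if "k \<le> n" for k
      using that xs \<open>S \<subseteq> I\<close> by (metis less_Suc_eq_le nth_mem subsetD)
    show "xs ! k < xs ! l" if "k < l" "l \<le> n" for k l
      using that xs by (simp add: sorted_wrt_nth_less)
    show "f (xs ! k) \<noteq> f (xs ! l)" if "k \<le> n" "l \<le> n" "k \<noteq> l" for k l
      using that xs \<open>inj_on f S\<close> by (metis inj_on_eq_iff less_Suc_eq_le nth_eq_iff_index_eq nth_mem)
  qed
qed

theorem theorem5p1:
  fixes M :: "real^3^3"
  assumes "det M = 1"
  shows "finite (GD_set (sphere 0 1) M) \<and> card (GD_set (sphere 0 1) M) \<le> 5"
proof -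
  have "invertible M"
    using assms by (simp add: invertible_det_nz)
  have "finite (slab_min M ` {1/2..<1}) \<and> card (slab_min M ` {1/2..<1}) \<le> 5"
  proof (rule finite_card_image_le_if_no_distinct_chain)
    fix s :: "nat \<Rightarrow> real"
    assume range: "\<And>k. k \<le> 5 \<Longrightarrow> s k \<in> {1/2..<1}"
      and increasing: "\<And>k l. k < l \<Longrightarrow> l \<le> 5 \<Longrightarrow> s k < s l"
      and distinct: "\<And>k l. k \<le> 5 \<Longrightarrow> l \<le> 5 \<Longrightarrow> k \<noteq> l \<Longrightarrow> slab_min M (s k) \<noteq> slab_min M (s l)"
    interpret distinct_slab_chain M s
      by unfold_locales (use \<open>invertible M\<close> increasing distinct range[of 0] range[of 5] in auto)
    show False
      by (rule impossible)
  qed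
  then show ?thesis
    using GD_set_sphere_subset[of M] card_mono finite_subset by (metis order_trans)
qed

end
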